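(* Let $G$ be a finite transitive permutation group, let $p$ be a prime, and suppose that a point stabiliser $H=G_\alpha$ contains a quasi-semiregular $p$-element. Then: (1) $H$ contains a Sylow $p$-subgroup of $G$; (2) if $S$ is a Sylow $p$-subgroup of $G$ contained in $H$, then $N_G(S)\le N_G(H)$; (3) if moreover $N_G(H)=H$, then $N_G(S)=N_H(S)$.
   Context: A permutation $g$ is quasi-semiregular if $\langle g\rangle$ has a unique fixed point and acts semiregularly (only the identity fixes a point) on the remaining points. *)

theory Defs
  imports "HOL-Algebra.Algebra" "HOL-Computational_Algebra.Primes"
begin

definition cyc_fix :: "('g, 'c) monoid_scheme \<Rightarrow> ('g \<Rightarrow> 'b \<Rightarrow> 'b) \<Rightarrow> 'b set \<Rightarrow> 'g \<Rightarrow> 'b set" where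
  "cyc_fix G \<phi> E g = {x \<in> E. \<forall>h \<in> generate G {g}. \<phi> h x = x}"

definition quasi_semiregular :: "('g, 'c) monoid_scheme \<Rightarrow> ('g \<Rightarrow> 'b \<Rightarrow> 'b) \<Rightarrow> 'b set \<Rightarrow> 'g \<Rightarrow> bool" where
  "quasi_semiregular G \<phi> E g \<longleftrightarrow>
     (\<exists>a. cyc_fix G \<phi> E g = {a} \<and>
          (\<forall>x \<in> E - {a}. \<forall>h \<in> generate G {g}. \<phi> h x = x \<longrightarrow> h = \<one>\<^bsub>G\<^esub>))"

definition p_element :: "('g, 'c) monoid_scheme \<Rightarrow> nat \<Rightarrow> 'g \<Rightarrow> bool" where
  "p_element G p g \<longleftrightarrow> g \<in> carrier G \<and> (\<exists>k. group.ord G g = p ^ k)"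

definition sylow_subgroup :: "('g, 'c) monoid_scheme \<Rightarrow> nat \<Rightarrow> 'g set \<Rightarrow> bool" where
  "sylow_subgroup G p S \<longleftrightarrow> subgroup S G \<and> card S = p ^ Factorial_Ring.multiplicity p (card (carrier G))"

end

theory Submission
  imports Defs
begin

(* Let P be the cyclic p-group generated by the quasi-semiregular element g. It fixes only alpha and
   acts semiregularly on the other points, so every P-invariant subset of Omega - {alpha} is a union
   of regular P-orbits; such a subset, if nonempty, forces P to be nontrivial and has size divisible
   by p. For Omega - {alpha} itself this gives |G : H| = |Omega| = 1 (mod p), so H contains a Sylow
   p-subgroup of G. If S <= H is Sylow and x normalises S, then S fixes beta = x alpha; if beta were
   not alpha, the H-orbit of beta would be a P-invariant subset of Omega - {alpha}, so p would divide
   |H : H_beta| although the Sylow subgroup S lies in H_beta. Hence N_G(S) <= H <= N_G(H). *)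

lemma (in group) card_dvd_card_of_subgroup_subset:
  assumes "subgroup S G" "subgroup K G" "S \<subseteq> K"
  shows "card S dvd card K"
proof -
  have "card (rcosets\<^bsub>G\<lparr>carrier := K\<rparr>\<^esub> S) * card S = card K"
    using group.lagrange[OF subgroup_imp_group[OF assms(2)] subgroup_incl[OF assms]]
    by (simp add: order_def)
  then show ?thesis
    by (metis dvd_triv_right)
qed

lemma (in group) not_prime_mult_card_dvd_order_if_sylow_subset:
  assumes "finite (carrier G)" "Factorial_Ring.prime p" "sylow_subgroup G p S" "subgroup K G" "S \<subseteq> K"
  shows "\<not> p * card K dvd order G"
proof
  define n where "n = multiplicity p (order G)"
  assume "p * card K dvd order G"
  moreover have "p ^ n dvd card K"
    using card_dvd_card_of_subgroup_subset assms(3-5)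
    unfolding sylow_subgroup_def n_def order_def by metis
  ultimately have "p ^ Suc n dvd order G"
    by (metis dvd_trans mult_dvd_mono dvd_refl power_Suc)
  moreover have "order G \<noteq> 0"
    using assms(1) order_gt_0_iff_finite by simp
  ultimately show False
    using assms(2) power_dvd_iff_le_multiplicity unfolding n_def
    by (metis Suc_n_not_le_n not_prime_unit)
qed

lemma (in group) exists_sylow_subgroup_subset_if_index_coprime:
  assumes "finite (carrier G)" "Factorial_Ring.prime p" "subgroup H G" "\<not> p dvd card (rcosets H)"
  shows "\<exists>S. sylow_subgroup G p S \<and> S \<subseteq> H"
proof -
  define n where "n = multiplicity p (order G)"
  have "card (rcosets H) * card H = order G"
    using lagrange[OF assms(3)] .
  moreover have "order G \<noteq> 0"
    using assms(1) order_gt_0_iff_finite by simp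
  ultimately have "n = multiplicity p (card (rcosets H)) + multiplicity p (card H)"
    unfolding n_def using assms(2)
    by (metis mult_eq_0_iff prime_elem_multiplicity_mult_distrib prime_imp_prime_elem)
  then have "n = multiplicity p (card H)"
    using assms(4) not_dvd_imp_multiplicity_0 by simp
  then obtain m where m: "card H = p ^ n * m"
    using multiplicity_dvd by blast
  have finite_H: "finite H"
    using assms(1,3) subgroup.subset finite_subset by blast
  obtain S where S: "subgroup S (G\<lparr>carrier := H\<rparr>)" "card S = p ^ n"
    using sylow_thm[of p "G\<lparr>carrier := H\<rparr>" n m] assms(2,3) subgroup_imp_group m finite_H
    by (auto simp: order_def)
  then show ?thesis
    using incl_subgroup[OF assms(3)] subgroup.subset[OF S(1)]
    unfolding sylow_subgroup_def n_def order_def by auto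
qed

lemma (in group_action) order_dvd_card_if_semiregular_on_invariant:
  assumes "Y \<subseteq> E" "finite Y"
    and invariant: "\<And>g y. g \<in> carrier G \<Longrightarrow> y \<in> Y \<Longrightarrow> \<phi> g y \<in> Y"
    and semiregular: "\<And>y. y \<in> Y \<Longrightarrow> stabilizer G \<phi> y = {\<one>}"
  shows "order G dvd card Y"
proof -
  define C where "C = orbit G \<phi> ` Y"
  have union: "\<Union>C = Y"
  proof
    show "\<Union>C \<subseteq> Y"
      using invariant unfolding C_def orbit_def by auto
    show "Y \<subseteq> \<Union>C"
      using assms(1) orbit_refl unfolding C_def by blast
  qed
  have "order G * card C = card (\<Union>C)"
  proof (rule card_partition)
    show "finite C" "finite (\<Union>C)"
      using assms(2) union unfolding C_def by simp_all
    show "card c = order G" if "c \<in> C" for c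
      using that orbit_stabilizer_theorem assms(1) semiregular unfolding C_def by fastforce
    have "C \<subseteq> orbits G E \<phi>"
      using assms(1) unfolding C_def orbits_def by blast
    then show "c1 \<inter> c2 = {}" if "c1 \<in> C" "c2 \<in> C" "c1 \<noteq> c2" for c1 c2
      using that disjoint_union by blast
  qed
  then show ?thesis
    using union by (metis dvd_triv_left)
qed

lemma (in group_action) stabilizer_act_Diff_singleton:
  assumes "a \<in> E" "g \<in> stabilizer G \<phi> a" "x \<in> E - {a}"
  shows "\<phi> g x \<in> E - {a}"
proof -
  have g: "g \<in> carrier G" "\<phi> g a = a"
    using assms(2) unfolding stabilizer_def by auto
  then have "\<phi> g x \<noteq> \<phi> g a"
    using inj_prop[OF g(1)] assms(1,3) by (auto dest: inj_onD)
  then show ?thesis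
    using g element_image assms(3) by auto
qed

lemma (in group_action) subset_stabilizer_act_if_normalizer:
  assumes "x \<in> E" "S \<subseteq> stabilizer G \<phi> x" "g \<in> normalizer G S"
  shows "S \<subseteq> stabilizer G \<phi> (\<phi> g x)"
proof
  interpret group G
    using group_hom group_hom.axioms(1) by blast
  fix s assume "s \<in> S"
  have S_carrier: "S \<subseteq> carrier G"
    using assms(2) stabilizer_subset by blast
  have g: "g \<in> carrier G" "g <#\<^bsub>G\<^esub> S #> inv g = S"
    using assms(3) S_carrier unfolding normalizer_def stabilizer_def by auto
  then obtain t where t: "t \<in> S" "s = g \<otimes> t \<otimes> inv g"
    using \<open>s \<in> S\<close> unfolding l_coset_def r_coset_def by auto
  have t_carrier: "t \<in> carrier G"
    using t(1) S_carrier by blast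
  have "\<phi> s (\<phi> g x) = \<phi> (g \<otimes> t) (\<phi> (inv g) (\<phi> g x))"
    using t(2) g(1) t_carrier composition_rule[of "\<phi> g x" "g \<otimes> t" "inv g"]
      element_image[OF g(1) assms(1) refl] by simp
  also have "\<dots> = \<phi> g (\<phi> t x)"
    using orbit_sym_aux[OF g(1) assms(1) refl] composition_rule[OF assms(1) g(1) t_carrier] by simp
  also have "\<dots> = \<phi> g x"
    using t(1) assms(2) unfolding stabilizer_def by auto
  finally show "s \<in> stabilizer G \<phi> (\<phi> g x)"
    using \<open>s \<in> S\<close> S_carrier unfolding stabilizer_def by auto
qed

locale quasi_semiregular_point_stabilizer = transitive_action G \<Omega> \<phi>
  for G :: "('g, 'c) monoid_scheme" (structure) and \<Omega> :: "'b set" and \<phi> +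
  fixes p :: nat and \<alpha> :: 'b and g :: 'g
  assumes finite_carrier: "finite (carrier G)"
    and prime_p: "Factorial_Ring.prime p"
    and \<alpha>_in: "\<alpha> \<in> \<Omega>"
    and g_stabilizes: "g \<in> stabilizer G \<phi> \<alpha>"
    and g_p_element: "p_element G p g"
    and g_quasi_semiregular: "quasi_semiregular G \<phi> \<Omega> g"
begin

sublocale group G
  by (rule group_hom.axioms(1)[OF group_hom])

lemma finite_\<Omega>: "finite \<Omega>"
proof -
  have "\<Omega> = (\<lambda>h. \<phi> h \<alpha>) ` carrier G"
    using unique_orbit[OF \<alpha>_in] element_image[OF _ \<alpha>_in] by blast
  then show ?thesis
    using finite_carrier by simp
qed

lemma generate_subset_stabilizer: "generate G {g} \<subseteq> stabilizer G \<phi> \<alpha>"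
  using generate_subgroup_incl stabilizer_subgroup[OF \<alpha>_in] g_stabilizes by blast

lemma cyc_fix_eq_singleton: "cyc_fix G \<phi> \<Omega> g = {\<alpha>}"
proof -
  obtain a where "cyc_fix G \<phi> \<Omega> g = {a}"
    using g_quasi_semiregular unfolding quasi_semiregular_def by blast
  moreover have "\<alpha> \<in> cyc_fix G \<phi> \<Omega> g"
    using \<alpha>_in generate_subset_stabilizer unfolding cyc_fix_def stabilizer_def by blast
  ultimately show ?thesis
    by simp
qed

lemma stabilizer_generate_eq_one:
  assumes "x \<in> \<Omega> - {\<alpha>}"
  shows "stabilizer (G\<lparr>carrier := generate G {g}\<rparr>) \<phi> x = {\<one>}"
proof -
  have "\<forall>h \<in> generate G {g}. \<phi> h x = x \<longrightarrow> h = \<one>"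
    using g_quasi_semiregular cyc_fix_eq_singleton assms unfolding quasi_semiregular_def by auto
  moreover have "\<one> \<in> stabilizer G \<phi> x"
    using stabilizer_one_closed assms by blast
  ultimately show ?thesis
    using generate.one unfolding stabilizer_def by auto
qed

lemma prime_dvd_card_if_invariant:
  assumes Y: "Y \<subseteq> \<Omega> - {\<alpha>}" "Y \<noteq> {}"
    and invariant: "\<And>h y. h \<in> generate G {g} \<Longrightarrow> y \<in> Y \<Longrightarrow> \<phi> h y \<in> Y"
  shows "p dvd card Y"
proof -
  define P where "P = generate G {g}"
  have g_carrier: "g \<in> carrier G"
    using g_p_element unfolding p_element_def by blast
  have "card P dvd card Y"
  proof -
    interpret P: group_action "G\<lparr>carrier := P\<rparr>" \<Omega> \<phi>
      using induced_action generate_is_subgroup g_carrier unfolding P_def by blast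
    have "order (G\<lparr>carrier := P\<rparr>) dvd card Y"
    proof (rule P.order_dvd_card_if_semiregular_on_invariant)
      show "Y \<subseteq> \<Omega>" "finite Y"
        using Y(1) finite_\<Omega> finite_subset by auto
      show "\<phi> h y \<in> Y" if "h \<in> carrier (G\<lparr>carrier := P\<rparr>)" "y \<in> Y" for h y
        using that invariant unfolding P_def by simp
      show "stabilizer (G\<lparr>carrier := P\<rparr>) \<phi> y = {\<one>\<^bsub>G\<lparr>carrier := P\<rparr>\<^esub>}" if "y \<in> Y" for y
        using that Y(1) stabilizer_generate_eq_one unfolding P_def by auto
    qed
    then show ?thesis
      by (simp add: order_def)
  qed
  moreover obtain k where k: "card P = p ^ k"
    using g_p_element generate_pow_card unfolding p_element_def P_def by metis
  moreover have "k \<noteq> 0"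
  proof
    assume "k = 0"
    then obtain h where "P = {h}"
      using k card_1_singletonE by auto
    then have P: "P = {\<one>}"
      using generate.one[of G "{g}"] unfolding P_def by auto
    obtain y where y: "y \<in> Y"
      using Y(2) by blast
    then have "\<one> \<in> stabilizer G \<phi> y"
      using Y(1) stabilizer_one_closed by blast
    then have "y \<in> cyc_fix G \<phi> \<Omega> g"
      using y Y(1) P unfolding cyc_fix_def P_def stabilizer_def by auto
    then show False
      using y Y(1) cyc_fix_eq_singleton by blast
  qed
  ultimately show ?thesis
    by (metis dvd_power dvd_trans neq0_conv)
qed

lemma not_prime_dvd_card: "\<not> p dvd card \<Omega>"
proof (cases "\<Omega> - {\<alpha>} = {}")
  case True
  then have "\<Omega> = {\<alpha>}"
    using \<alpha>_in by blast
  then show ?thesis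
    using prime_gt_1_nat[OF prime_p] by simp
next
  case False
  have "p dvd card (\<Omega> - {\<alpha>})"
  proof (rule prime_dvd_card_if_invariant[OF subset_refl False])
    show "\<phi> h y \<in> \<Omega> - {\<alpha>}" if "h \<in> generate G {g}" "y \<in> \<Omega> - {\<alpha>}" for h y
      using stabilizer_act_Diff_singleton[OF \<alpha>_in] generate_subset_stabilizer that by blast
  qed
  moreover have "card \<Omega> = card (\<Omega> - {\<alpha>}) + 1"
    using card_Suc_Diff1[OF finite_\<Omega> \<alpha>_in] by simp
  ultimately have "p dvd card \<Omega> \<longleftrightarrow> p dvd 1"
    using dvd_add_right_iff by metis
  then show ?thesis
    using prime_gt_1_nat[OF prime_p] by auto
qed

lemma card_rcosets_stabilizer: "card (rcosets (stabilizer G \<phi> \<alpha>)) = card \<Omega>"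
proof -
  have "orbit G \<phi> \<alpha> = \<Omega>"
    using unique_orbit[OF \<alpha>_in] element_image[OF _ \<alpha>_in] unfolding orbit_def by blast
  then have "card (rcosets (stabilizer G \<phi> \<alpha>)) * card (stabilizer G \<phi> \<alpha>)
      = card \<Omega> * card (stabilizer G \<phi> \<alpha>)"
    using lagrange[OF stabilizer_subgroup[OF \<alpha>_in]] orbit_stabilizer_theorem[OF \<alpha>_in] by simp
  moreover have "card (stabilizer G \<phi> \<alpha>) \<noteq> 0"
    using stabilizer_one_closed[OF \<alpha>_in] stabilizer_subset finite_carrier
    by (metis card_0_eq empty_iff finite_subset)
  ultimately show ?thesis
    by simp
qed

lemma sylow_subgroup_fixes_only_\<alpha>:
  assumes S: "sylow_subgroup G p S" "S \<subseteq> stabilizer G \<phi> \<alpha>"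
    and \<beta>: "\<beta> \<in> \<Omega>" "S \<subseteq> stabilizer G \<phi> \<beta>"
  shows "\<beta> = \<alpha>"
proof (rule ccontr)
  assume "\<beta> \<noteq> \<alpha>"
  define H where "H = stabilizer G \<phi> \<alpha>"
  have H: "subgroup H G"
    unfolding H_def using stabilizer_subgroup[OF \<alpha>_in] .
  interpret H: group_action "G\<lparr>carrier := H\<rparr>" \<Omega> \<phi>
    using induced_action[OF H] .
  define Y where "Y = orbit (G\<lparr>carrier := H\<rparr>) \<phi> \<beta>"
  define K where "K = stabilizer (G\<lparr>carrier := H\<rparr>) \<phi> \<beta>"
  have "card Y * card K = card H"
    using H.orbit_stabilizer_theorem[OF \<beta>(1)] unfolding Y_def K_def order_def by simp
  moreover have "p dvd card Y"
  proof (rule prime_dvd_card_if_invariant)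
    show "Y \<subseteq> \<Omega> - {\<alpha>}"
      using stabilizer_act_Diff_singleton[OF \<alpha>_in] \<beta> \<open>\<beta> \<noteq> \<alpha>\<close>
      unfolding Y_def orbit_def H_def by auto
    show "Y \<noteq> {}"
      using H.orbit_refl[OF \<beta>(1)] unfolding Y_def by blast
    show "\<phi> h y \<in> Y" if h: "h \<in> generate G {g}" and y: "y \<in> Y" for h y
    proof -
      obtain k where k: "k \<in> H" "y = \<phi> k \<beta>"
        using y unfolding Y_def orbit_def by auto
      have h: "h \<in> H"
        using h generate_subset_stabilizer unfolding H_def by blast
      have "h \<in> carrier G" "k \<in> carrier G"
        using k(1) h subgroup.subset[OF H] by auto
      then have "\<phi> h y = \<phi> (h \<otimes> k) \<beta>"
        using composition_rule[OF \<beta>(1)] k(2) by simp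
      then show ?thesis
        using subgroup.m_closed[OF H h k(1)] unfolding Y_def orbit_def by auto
    qed
  qed
  ultimately have "p * card K dvd card H"
    by (metis mult_dvd_mono dvd_refl)
  also have "card H dvd order G"
    using lagrange[OF H] by (metis dvd_triv_right)
  finally have "p * card K dvd order G" .
  moreover have "K = H \<inter> stabilizer G \<phi> \<beta>"
    unfolding K_def H_def stabilizer_def by auto
  then have "subgroup K G" "S \<subseteq> K"
    using subgroups_Inter_pair H stabilizer_subgroup[OF \<beta>(1)] S \<beta>(2) unfolding H_def by auto
  ultimately show False
    using not_prime_mult_card_dvd_order_if_sylow_subset finite_carrier prime_p S(1) by blast
qed

lemma normalizer_sylow_subset_stabilizer:
  assumes "sylow_subgroup G p S" "S \<subseteq> stabilizer G \<phi> \<alpha>"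
  shows "normalizer G S \<subseteq> stabilizer G \<phi> \<alpha>"
proof
  fix x assume x: "x \<in> normalizer G S"
  then have "x \<in> carrier G"
    unfolding normalizer_def stabilizer_def by blast
  moreover have "\<phi> x \<alpha> = \<alpha>"
    using sylow_subgroup_fixes_only_\<alpha> assms subset_stabilizer_act_if_normalizer[OF \<alpha>_in assms(2) x]
      element_image[OF _ \<alpha>_in] \<open>x \<in> carrier G\<close> by blast
  ultimately show "x \<in> stabilizer G \<phi> \<alpha>"
    unfolding stabilizer_def by blast
qed

end

theorem lemma2p3:
  fixes G :: "('g, 'c) monoid_scheme" and \<phi> :: "'g \<Rightarrow> 'b \<Rightarrow> 'b" and \<Omega> :: "'b set"
    and p :: nat and \<alpha> :: 'b and H :: "'g set"
  assumes "group G" and "finite (carrier G)"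
    and "faithful_action G \<Omega> \<phi>" and "transitive_action G \<Omega> \<phi>"
    and "Factorial_Ring.prime p" and "\<alpha> \<in> \<Omega>"
    and H_def: "H = stabilizer G \<phi> \<alpha>"
    and "\<exists>g \<in> H. p_element G p g \<and> quasi_semiregular G \<phi> \<Omega> g"
  shows "(\<exists>S. sylow_subgroup G p S \<and> S \<subseteq> H)
    \<and> (\<forall>S. sylow_subgroup G p S \<and> S \<subseteq> H \<longrightarrow> normalizer G S \<subseteq> normalizer G H)
    \<and> (normalizer G H = H \<longrightarrow>
         (\<forall>S. sylow_subgroup G p S \<and> S \<subseteq> H \<longrightarrow> normalizer G S = normalizer G S \<inter> H))"
proof -
  obtain g where g: "g \<in> H" "p_element G p g" "quasi_semiregular G \<phi> \<Omega> g"
    using assms(8) by blast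
  interpret quasi_semiregular_point_stabilizer G \<Omega> \<phi> p \<alpha> g
    using assms(2,4-6) g unfolding H_def quasi_semiregular_point_stabilizer_def
      quasi_semiregular_point_stabilizer_axioms_def by blast
  have H: "subgroup H G"
    using stabilizer_subgroup[OF \<alpha>_in] H_def by simp
  have "\<exists>S. sylow_subgroup G p S \<and> S \<subseteq> H"
    using exists_sylow_subgroup_subset_if_index_coprime[OF finite_carrier prime_p H]
      card_rcosets_stabilizer not_prime_dvd_card H_def by simp
  moreover have "H \<subseteq> normalizer G H"
    using subgroup.subset[OF normal_imp_subgroup[OF subgroup_in_normalizer[OF H]]] by simp
  moreover have "normalizer G S \<subseteq> H" if "sylow_subgroup G p S \<and> S \<subseteq> H" for S
    using normalizer_sylow_subset_stabilizer that H_def by blast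
  ultimately show ?thesis
    by blast
qed

end
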